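(* In $\mathcal F_8$, the hyperelliptic divisor $H_h$ and the unigonal divisor $H_u$ have nonempty intersection, and $H_u$ has no self-intersection in the sense of Looijenga, i.e. $H_u^{(2)}=\emptyset$.
   Context: $\Lambda_8=U^2\oplus E_8\oplus E_7\oplus A_1$ (negative definite root lattices), signature $(2,18)$; $\mathcal D_{\Lambda_8}=\{[z]\in\mathbb P(\Lambda_8\otimes\mathbb C):z^2=0,z\bar z>0\}$, $\mathcal D_v=\{[z]\in\mathcal D_{\Lambda_8}:z\cdot v=0\}$, $\Gamma=O(\Lambda_8)$, $\mathcal F_8=\Gamma\backslash\mathcal D_{\Lambda_8}$. For primitive $v\in\Lambda_8$, $\operatorname{div}(v)$ is the positive generator of $\langle v,\Lambda_8\rangle$; $v$ is unigonal if $v^2=-2,\operatorname{div}(v)=2$, hyperelliptic if $v^2=-6,\operatorname{div}(v)=2$. $H_u$ (resp. $H_h$) is the image in $\mathcal F_8$ of $\bigcup\mathcal D_v$ over unigonal (resp. hyperelliptic) $v$. For $m\ge1$, the Looijenga self-intersection $H_u^{(m)}$ is the image in $\mathcal F_8$ of $\bigcup\mathcal D_{v_1}\cap\cdots\cap\mathcal D_{v_m}$ over all $m$-tuples of linearly independent vectors $v_1,\dots,v_m$ in the $\Gamma$-orbit of a unigonal vector. *)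

theory Defs
  imports Complex_Main
begin

text \<open>Coordinates 0..19 (vectors are functions nat => _ supported on {..<20}):
  0,1: first U; 2,3: second U; 4..11: E8; 12..18: E7; 19: A1.
  Root lattices are negative definite: simple roots have square -2 and adjacent
  simple roots have product +1 (negated Cartan matrix).\<close>

definition rk :: nat where "rk = 20"

definition gram_edges :: "(nat \<times> nat) set" where
  "gram_edges = {(0,1),(2,3),
     (4,5),(5,6),(6,7),(7,8),(8,9),(9,10),(8,11),
     (12,13),(13,14),(14,15),(15,16),(16,17),(15,18)}"

definition gram :: "nat \<Rightarrow> nat \<Rightarrow> int" where
  "gram i j = (if i < rk \<and> j < rk then
      (if i = j then (if i < 4 then 0 else -2)
       else if (i,j) \<in> gram_edges \<or> (j,i) \<in> gram_edges then 1 else 0)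
    else 0)"

definition Lam :: "(nat \<Rightarrow> int) set" where
  "Lam = {v. \<forall>i\<ge>rk. v i = 0}"

definition bil :: "(nat \<Rightarrow> int) \<Rightarrow> (nat \<Rightarrow> int) \<Rightarrow> int" where
  "bil x y = (\<Sum>i<rk. \<Sum>j<rk. x i * gram i j * y j)"

definition bilC :: "(nat \<Rightarrow> complex) \<Rightarrow> (nat \<Rightarrow> complex) \<Rightarrow> complex" where
  "bilC z w = (\<Sum>i<rk. \<Sum>j<rk. z i * of_int (gram i j) * w j)"

definition herm :: "(nat \<Rightarrow> complex) \<Rightarrow> (nat \<Rightarrow> complex) \<Rightarrow> complex" where
  "herm z w = bilC z (\<lambda>i. cnj (w i))"

definition LamC :: "(nat \<Rightarrow> complex) set" where
  "LamC = {z. \<forall>i\<ge>rk. z i = 0}"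

definition embC :: "(nat \<Rightarrow> int) \<Rightarrow> (nat \<Rightarrow> complex)" where
  "embC v = (\<lambda>i. of_int (v i))"

definition primitive :: "(nat \<Rightarrow> int) \<Rightarrow> bool" where
  "primitive v \<longleftrightarrow> v \<in> Lam \<and> v \<noteq> (\<lambda>_. 0) \<and>
     \<not> (\<exists>n::int. \<exists>w\<in>Lam. n > 1 \<and> v = (\<lambda>i. n * w i))"

definition divisor_is :: "(nat \<Rightarrow> int) \<Rightarrow> int \<Rightarrow> bool" where
  "divisor_is v d \<longleftrightarrow> d > 0 \<and> {bil v x | x. x \<in> Lam} = {d * k | k. True}"

definition unigonal :: "(nat \<Rightarrow> int) \<Rightarrow> bool" where
  "unigonal v \<longleftrightarrow> primitive v \<and> bil v v = -2 \<and> divisor_is v 2"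

definition hyperelliptic :: "(nat \<Rightarrow> int) \<Rightarrow> bool" where
  "hyperelliptic v \<longleftrightarrow> primitive v \<and> bil v v = -6 \<and> divisor_is v 2"

definition act :: "(nat \<Rightarrow> nat \<Rightarrow> int) \<Rightarrow> (nat \<Rightarrow> int) \<Rightarrow> (nat \<Rightarrow> int)" where
  "act g x = (\<lambda>i. if i < rk then (\<Sum>j<rk. g i j * x j) else 0)"

definition actC :: "(nat \<Rightarrow> nat \<Rightarrow> int) \<Rightarrow> (nat \<Rightarrow> complex) \<Rightarrow> (nat \<Rightarrow> complex)" where
  "actC g z = (\<lambda>i. if i < rk then (\<Sum>j<rk. of_int (g i j) * z j) else 0)"

definition Gamma :: "(nat \<Rightarrow> nat \<Rightarrow> int) set" where
  "Gamma = {g. (\<forall>i j. (rk \<le> i \<or> rk \<le> j) \<longrightarrow> g i j = 0) \<and>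
              bij_betw (act g) Lam Lam \<and>
              (\<forall>x\<in>Lam. \<forall>y\<in>Lam. bil (act g x) (act g y) = bil x y)}"

text \<open>Points of D are represented by nonzero vectors z in Lambda_8 (x) C (points of
  the projective space are lines); the conditions are invariant under scaling.\<close>
definition Dvec :: "(nat \<Rightarrow> complex) set" where
  "Dvec = {z. z \<in> LamC \<and> z \<noteq> (\<lambda>_. 0) \<and> bilC z z = 0 \<and> Re (herm z z) > 0}"

definition Dv :: "(nat \<Rightarrow> int) \<Rightarrow> (nat \<Rightarrow> complex) set" where
  "Dv v = {z \<in> Dvec. bilC z (embC v) = 0}"

text \<open>Two representatives give the same point of F_8 = Gamma \ D iff they differ by
  an element of Gamma and a nonzero scalar.\<close>
definition F8rel :: "((nat \<Rightarrow> complex) \<times> (nat \<Rightarrow> complex)) set" where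
  "F8rel = {(z, w). z \<in> Dvec \<and> w \<in> Dvec \<and>
             (\<exists>g\<in>Gamma. \<exists>c::complex. c \<noteq> 0 \<and> w = (\<lambda>i. c * actC g z i))}"

definition F8 :: "(nat \<Rightarrow> complex) set set" where
  "F8 = Dvec // F8rel"

definition F8proj :: "(nat \<Rightarrow> complex) \<Rightarrow> (nat \<Rightarrow> complex) set" where
  "F8proj z = F8rel `` {z}"

definition Hu :: "(nat \<Rightarrow> complex) set set" where
  "Hu = F8proj ` (\<Union>v\<in>{v. unigonal v}. Dv v)"

definition Hh :: "(nat \<Rightarrow> complex) set set" where
  "Hh = F8proj ` (\<Union>v\<in>{v. hyperelliptic v}. Dv v)"

definition unigonal_orbit :: "(nat \<Rightarrow> int) set" where
  "unigonal_orbit = {act g v | g v. g \<in> Gamma \<and> unigonal v}"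

text \<open>Linear independence of v_0,...,v_{m-1} in Lambda_8 (over Z, equivalently over Q).\<close>
definition lin_indep :: "nat \<Rightarrow> (nat \<Rightarrow> nat \<Rightarrow> int) \<Rightarrow> bool" where
  "lin_indep m vs \<longleftrightarrow> (\<forall>c :: nat \<Rightarrow> int.
      (\<forall>i. (\<Sum>k<m. c k * vs k i) = 0) \<longrightarrow> (\<forall>k<m. c k = 0))"

definition Hu_self :: "nat \<Rightarrow> (nat \<Rightarrow> complex) set set" where
  "Hu_self m = F8proj ` (\<Union>vs\<in>{vs. (\<forall>k<m. vs k \<in> unigonal_orbit) \<and> lin_indep m vs}.
                            (\<Inter>k<m. Dv (vs k)) \<inter> Dvec)"

end

theory Submission
  imports Defs
begin

(*
  A point of H_h inter H_u: the period z = (e0 + e1) + i (e2 + e3), which spans the positive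
  2-plane of U + U, is orthogonal to the A1 root (a unigonal vector) and to twice the minuscule
  weight of E7 (a hyperelliptic vector).

  No self-intersection: a vector v in the Gamma-orbit of a unigonal vector has v^2 = -2 and
  v/2 in the dual lattice. The classes of the two vectors above generate the discriminant group
  (Z/2)^2 of Lambda_8, and v^2 mod 8 forces v to be congruent to the A1 root modulo 2 Lambda_8.
  Hence v1.v2 = 2 mod 4 for two such vectors, so one of v1 + v2, v1 - v2 has nonnegative square;
  it is nonzero if v1, v2 are independent. If both are orthogonal to a period z, so is this
  combination; but z spans a positive 2-plane and Lambda_8 has signature (2,18), so the
  orthogonal complement of z is negative definite.
*)

(* The Gram form with coefficients in an arbitrary commutative ring: it serves for Lambda_8 and
   for its real and complex scalar extensions alike. *)
definition lat_form :: "(nat \<Rightarrow> 'a::comm_ring_1) \<Rightarrow> (nat \<Rightarrow> 'a) \<Rightarrow> 'a" where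
  "lat_form x y = (\<Sum>i<rk. \<Sum>j<rk. x i * of_int (gram i j) * y j)"

lemma bil_eq_lat_form: "bil = lat_form"
  by (intro ext) (simp add: bil_def lat_form_def)

lemma bilC_eq_lat_form: "bilC = lat_form"
  by (intro ext) (simp add: bilC_def lat_form_def)

lemma lat_form_explicit:
  "lat_form x y = x 0 * y 1 + x 1 * y 0 + x 2 * y 3 + x 3 * y 2
    + x 4 * y 5 + x 5 * y 4 + x 5 * y 6 + x 6 * y 5 + x 6 * y 7 + x 7 * y 6 + x 7 * y 8 + x 8 * y 7
    + x 8 * y 9 + x 9 * y 8 + x 9 * y 10 + x 10 * y 9 + x 8 * y 11 + x 11 * y 8
    + x 12 * y 13 + x 13 * y 12 + x 13 * y 14 + x 14 * y 13 + x 14 * y 15 + x 15 * y 14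
    + x 15 * y 16 + x 16 * y 15 + x 16 * y 17 + x 17 * y 16 + x 15 * y 18 + x 18 * y 15
    - 2 * (x 4 * y 4 + x 5 * y 5 + x 6 * y 6 + x 7 * y 7 + x 8 * y 8 + x 9 * y 9 + x 10 * y 10
      + x 11 * y 11 + x 12 * y 12 + x 13 * y 13 + x 14 * y 14 + x 15 * y 15 + x 16 * y 16
      + x 17 * y 17 + x 18 * y 18 + x 19 * y 19)"
  by (simp add: lat_form_def rk_def eval_nat_numeral gram_def gram_edges_def)

lemma lat_form_sym: "lat_form x y = lat_form y x"
  by (simp add: lat_form_explicit algebra_simps)

lemma lat_form_add_left: "lat_form (\<lambda>i. x i + y i) z = lat_form x z + lat_form y z"
  by (simp add: lat_form_def algebra_simps sum.distrib)

lemma lat_form_add_right: "lat_form z (\<lambda>i. x i + y i) = lat_form z x + lat_form z y"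
  by (simp add: lat_form_def algebra_simps sum.distrib)

lemma lat_form_diff_left: "lat_form (\<lambda>i. x i - y i) z = lat_form x z - lat_form y z"
  by (simp add: lat_form_def algebra_simps sum_subtractf)

lemma lat_form_diff_right: "lat_form z (\<lambda>i. x i - y i) = lat_form z x - lat_form z y"
  by (simp add: lat_form_def algebra_simps sum_subtractf)

lemma lat_form_mult_left: "lat_form (\<lambda>i. c * x i) z = c * lat_form x z"
  by (simp add: lat_form_def algebra_simps sum_distrib_left)

lemma lat_form_mult_right: "lat_form z (\<lambda>i. c * x i) = c * lat_form z x"
  by (simp add: lat_form_def algebra_simps sum_distrib_left)

lemma lat_form_zero_right [simp]: "lat_form x (\<lambda>_. 0) = 0"
  by (simp add: lat_form_def)

lemma lat_form_uminus_right: "lat_form z (\<lambda>i. - x i) = - lat_form z x"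
  by (simp add: lat_form_def sum_negf)

lemma lat_form_of_real:
  "lat_form (\<lambda>i. of_real (x i)) (\<lambda>i. of_real (y i))
    = (of_real (lat_form x y) :: 'a::{real_algebra_1,comm_ring_1})"
  by (simp add: lat_form_def)

lemma lat_form_of_int:
  "lat_form (\<lambda>i. of_int (x i)) (\<lambda>i. of_int (y i)) = (of_int (lat_form x y) :: 'a::comm_ring_1)"
  by (simp add: lat_form_def)

lemma lat_form_complex:
  fixes x y u v :: "nat \<Rightarrow> real"
  shows "lat_form (\<lambda>i. of_real (x i) + \<i> * of_real (y i)) (\<lambda>i. of_real (u i) + \<i> * of_real (v i))
    = of_real (lat_form x u - lat_form y v) + \<i> * of_real (lat_form x v + lat_form y u)"
  by (simp only: lat_form_add_left lat_form_add_right lat_form_mult_left lat_form_mult_right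
      lat_form_of_real) (simp add: algebra_simps)

lemma even_lat_form_diag:
  fixes x :: "nat \<Rightarrow> int"
  shows "even (lat_form x x)"
  by (simp add: lat_form_explicit)

section \<open>Signature (2,18)\<close>

(* Completing squares along the Dynkin diagrams of E8 and E7 (an LDL decomposition of the
   Cartan matrices); the terms (w0 - w1)^2/2 and (w2 - w3)^2/2 come from the two copies of U. *)
definition sos_part :: "(nat \<Rightarrow> real) \<Rightarrow> real" where
  "sos_part w = 1/2 * (w 0 - w 1)\<^sup>2 + 1/2 * (w 2 - w 3)\<^sup>2
    + 2 * (w 4 - 1/2 * w 5)\<^sup>2 + 3/2 * (w 5 - 2/3 * w 6)\<^sup>2 + 4/3 * (w 6 - 3/4 * w 7)\<^sup>2
    + 5/4 * (w 7 - 4/5 * w 8)\<^sup>2 + 6/5 * (w 8 - 5/6 * w 9 - 5/6 * w 11)\<^sup>2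
    + 7/6 * (w 9 - 6/7 * w 10 - 5/7 * w 11)\<^sup>2 + 8/7 * (w 10 - 5/8 * w 11)\<^sup>2 + 1/8 * (w 11)\<^sup>2
    + 2 * (w 12 - 1/2 * w 13)\<^sup>2 + 3/2 * (w 13 - 2/3 * w 14)\<^sup>2 + 4/3 * (w 14 - 3/4 * w 15)\<^sup>2
    + 5/4 * (w 15 - 4/5 * w 16 - 4/5 * w 18)\<^sup>2 + 6/5 * (w 16 - 5/6 * w 17 - 2/3 * w 18)\<^sup>2
    + 7/6 * (w 17 - 4/7 * w 18)\<^sup>2 + 2/7 * (w 18)\<^sup>2 + 2 * (w 19)\<^sup>2"

lemma lat_form_eq_hyperbolic_minus_sos:
  fixes w :: "nat \<Rightarrow> real"
  shows "lat_form w w = ((w 0 + w 1)\<^sup>2 + (w 2 + w 3)\<^sup>2) / 2 - sos_part w"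
  by (simp add: lat_form_explicit sos_part_def power2_eq_square field_simps)

lemma sos_part_nonneg: "0 \<le> sos_part w"
  by (simp add: sos_part_def)

lemma sos_part_eq_0D:
  assumes "sos_part w = 0"
  shows "w 0 = w 1" "w 2 = w 3" "\<forall>i\<in>{4..<20}. w i = 0"
  using assms by (simp_all add: sos_part_def add_nonneg_eq_0_iff eval_nat_numeral atLeastLessThanSuc)

lemma lat_form_le_hyperbolic:
  fixes w :: "nat \<Rightarrow> real"
  shows "lat_form w w \<le> ((w 0 + w 1)\<^sup>2 + (w 2 + w 3)\<^sup>2) / 2"
  unfolding lat_form_eq_hyperbolic_minus_sos using sos_part_nonneg[of w] by linarith

lemma lat_form_negative_definite:
  fixes w :: "nat \<Rightarrow> real"
  assumes "w 0 + w 1 = 0" "w 2 + w 3 = 0" "0 \<le> lat_form w w"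
  shows "\<forall>i<20. w i = 0"
proof -
  have "sos_part w = 0"
    using assms sos_part_nonneg[of w] by (simp add: lat_form_eq_hyperbolic_minus_sos)
  from sos_part_eq_0D[OF this] assms(1,2) show ?thesis
    by (auto simp: less_Suc_eq eval_nat_numeral)
qed

(* The form is positive definite on span {x, y} and bounded above by the square of the projection
   to the positive plane of U + U, so this projection is injective on span {x, y}. *)
lemma positive_plane_projection_det_nonzero:
  fixes x y :: "nat \<Rightarrow> real"
  assumes xy: "lat_form x y = 0" and xx: "lat_form x x = p" and yy: "lat_form y y = p"
    and p: "0 < p"
  shows "(x 0 + x 1) * (y 2 + y 3) - (x 2 + x 3) * (y 0 + y 1) \<noteq> 0"
proof -
  define A B C D where "A = x 0 + x 1" "B = x 2 + x 3" "C = y 0 + y 1" "D = y 2 + y 3"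
  have bound: "2 * p * (a\<^sup>2 + b\<^sup>2) \<le> (a * A + b * C)\<^sup>2 + (a * B + b * D)\<^sup>2" for a b
  proof -
    define w where "w = (\<lambda>i. a * x i + b * y i)"
    have "lat_form w w = p * (a\<^sup>2 + b\<^sup>2)"
      unfolding w_def
      by (simp add: lat_form_add_left lat_form_add_right lat_form_mult_left lat_form_mult_right
          lat_form_sym[of y x] xx yy xy power2_eq_square algebra_simps)
    moreover have "w 0 + w 1 = a * A + b * C" "w 2 + w 3 = a * B + b * D"
      by (simp_all add: w_def A_B_C_D_def algebra_simps)
    ultimately show ?thesis
      using lat_form_le_hyperbolic[of w] by simp
  qed
  have "A * D - B * C \<noteq> 0"
  proof
    assume det: "A * D - B * C = 0"
    have "2 * p * (C\<^sup>2 + A\<^sup>2) \<le> 0"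
      using bound[of C "-A"] det by (simp add: algebra_simps)
    then have AC: "A = 0" "C = 0"
      using p by (simp_all add: mult_le_0_iff sum_power2_le_zero_iff)
    have "2 * p * (D\<^sup>2 + B\<^sup>2) \<le> 0"
      using bound[of D "-B"] AC by (simp add: algebra_simps)
    then have BD: "B = 0" "D = 0"
      using p by (simp_all add: mult_le_0_iff sum_power2_le_zero_iff)
    show False
      using bound[of 1 0] AC BD p by simp
  qed
  then show ?thesis by (simp add: A_B_C_D_def)
qed

lemma positive_plane_orthogonal_nonneg_eq_0:
  fixes x y u :: "nat \<Rightarrow> real"
  assumes xy: "lat_form x y = 0" and xx: "lat_form x x = p" and yy: "lat_form y y = p"
    and p: "0 < p"
    and xu: "lat_form x u = 0" and yu: "lat_form y u = 0" and uu: "0 \<le> lat_form u u"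
  shows "\<forall>i<20. u i = 0"
proof -
  define A B C D where "A = x 0 + x 1" "B = x 2 + x 3" "C = y 0 + y 1" "D = y 2 + y 3"
  define U V where "U = u 0 + u 1" "V = u 2 + u 3"
  have det: "A * D - B * C \<noteq> 0"
    using positive_plane_projection_det_nonzero[OF xy xx yy p] by (simp add: A_B_C_D_def)
  \<comment> \<open>Cramer's rule: u - a x - b y projects to zero in the positive plane of U + U\<close>
  define a b where "a = (U * D - V * C) / (A * D - B * C)" "b = (A * V - B * U) / (A * D - B * C)"
  define w where "w = (\<lambda>i. u i - a * x i - b * y i)"
  have "w 0 + w 1 = U - a * A - b * C" "w 2 + w 3 = V - a * B - b * D"
    by (simp_all add: w_def A_B_C_D_def U_V_def algebra_simps)
  moreover have "U - a * A - b * C = 0" "V - a * B - b * D = 0"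
    using det by (simp_all add: a_b_def field_simps)
  ultimately have w01: "w 0 + w 1 = 0" and w23: "w 2 + w 3 = 0" by simp_all
  have ww: "lat_form w w = lat_form u u + p * (a\<^sup>2 + b\<^sup>2)"
    unfolding w_def
    by (simp only: lat_form_diff_left lat_form_diff_right lat_form_mult_left lat_form_mult_right
        lat_form_sym[of y x] lat_form_sym[of u x] lat_form_sym[of u y] xx yy xy xu yu)
      (simp add: power2_eq_square algebra_simps)
  with uu p have "0 \<le> lat_form w w" by simp
  then have w0: "\<forall>i<20. w i = 0"
    using lat_form_negative_definite[OF w01 w23] by blast
  then have "lat_form w w = 0" by (simp add: lat_form_explicit)
  with ww uu p have "a = 0 \<and> b = 0"
    by (simp add: add_nonneg_eq_0_iff)
  with w0 show ?thesis by (simp add: w_def)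
qed

lemma lattice_vector_orthogonal_to_period_eq_0:
  assumes z: "z \<in> Dvec" and u: "u \<in> Lam"
    and zu: "bilC z (embC u) = 0" and uu: "0 \<le> bil u u"
  shows "u = (\<lambda>_. 0)"
proof -
  define x y where "x = (\<lambda>i. Re (z i))" "y = (\<lambda>i. Im (z i))"
  define r where "r = (\<lambda>i. real_of_int (u i))"
  have z_eq: "z = (\<lambda>i. of_real (x i) + \<i> * of_real (y i))"
    by (intro ext) (simp add: x_y_def complex_eq)
  have cnj_z: "(\<lambda>i. cnj (z i)) = (\<lambda>i. of_real (x i) - \<i> * of_real (y i))"
    by (intro ext) (simp add: x_y_def complex_eq_iff)
  have u_eq: "embC u = (\<lambda>i. of_real (r i))"
    by (simp add: embC_def r_def)
  have "lat_form z z = of_real (lat_form x x - lat_form y y) + \<i> * of_real (2 * lat_form x y)"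
    using lat_form_complex[of x y x y] by (simp add: z_eq[symmetric] lat_form_sym[of y x])
  moreover have "lat_form z (\<lambda>i. cnj (z i)) = of_real (lat_form x x + lat_form y y)"
    using lat_form_complex[of x y x "\<lambda>i. - y i"]
    by (simp add: z_eq[symmetric] cnj_z[symmetric] lat_form_uminus_right lat_form_sym[of y x])
  moreover have "lat_form z z = 0" "0 < Re (lat_form z (\<lambda>i. cnj (z i)))"
    using z by (simp_all add: Dvec_def herm_def bilC_eq_lat_form)
  ultimately have xy: "lat_form x y = 0" "lat_form y y = lat_form x x" "0 < lat_form x x"
    by (simp_all add: complex_eq_iff)
  have "lat_form x r = 0" "lat_form y r = 0"
    using lat_form_complex[of x y r "\<lambda>_. 0"] zu
    by (simp_all add: z_eq[symmetric] u_eq[symmetric] bilC_eq_lat_form complex_eq_iff)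
  moreover have "0 \<le> lat_form r r"
    using uu by (simp add: r_def lat_form_of_int bil_eq_lat_form)
  ultimately have r0: "\<forall>i<20. r i = 0"
    using positive_plane_orthogonal_nonneg_eq_0[OF xy(1) refl xy(2) xy(3)] by blast
  show ?thesis
  proof
    fix i
    show "u i = 0"
      using r0 u by (cases "i < 20") (simp_all add: r_def Lam_def rk_def)
  qed
qed

section \<open>A point of H_h inter H_u\<close>

(* Twice the minuscule fundamental weight of E7 (negated, as the root lattices are negative
   definite). *)
definition e7_double_weight :: "nat \<Rightarrow> int" where
  "e7_double_weight i = (if i = 12 then 3 else if i = 13 then 4 else if i = 14 then 5
     else if i = 15 then 6 else if i = 16 then 4 else if i = 17 then 2 else if i = 18 then 3 else 0)"

definition a1_root :: "nat \<Rightarrow> int" where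
  "a1_root i = (if i = 19 then 1 else 0)"

lemma lat_form_e7_double_weight: "lat_form e7_double_weight x = -2 * x 12"
  by (simp add: lat_form_explicit e7_double_weight_def)

lemma lat_form_a1_root: "lat_form a1_root x = -2 * x 19"
  by (simp add: lat_form_explicit a1_root_def)

lemma divisor_is_2_if_pairing_coord:
  assumes pairing: "\<And>x. lat_form v x = -2 * x k" and k: "k < 20"
  shows "divisor_is v 2"
proof -
  have "{lat_form v x |x. x \<in> Lam} = {2 * m |m. True}"
  proof (intro set_eqI iffI)
    fix n :: int
    assume "n \<in> {lat_form v x |x. x \<in> Lam}"
    then obtain x where "n = lat_form v x" by blast
    then have "n = 2 * (- x k)" using pairing by simp
    then show "n \<in> {2 * m |m. True}" by blast
  next
    fix n :: int
    assume "n \<in> {2 * m |m. True}"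
    then obtain m where n: "n = 2 * m" by blast
    define x :: "nat \<Rightarrow> int" where "x i = (if i = k then - m else 0)" for i
    have "x \<in> Lam" using k by (simp add: x_def Lam_def rk_def)
    moreover have "n = lat_form v x" using pairing[of x] n by (simp add: x_def)
    ultimately show "n \<in> {lat_form v x |x. x \<in> Lam}" by blast
  qed
  then show ?thesis by (simp add: divisor_is_def bil_eq_lat_form)
qed

lemma primitive_if_coprime_coords:
  assumes "v \<in> Lam" and "coprime (v i) (v j)"
  shows "primitive v"
  unfolding primitive_def
proof (intro conjI notI)
  show "v \<in> Lam" by (fact assms(1))
next
  assume "v = (\<lambda>_. 0)"
  with assms(2) show False by simp
next
  assume "\<exists>n::int. \<exists>w\<in>Lam. 1 < n \<and> v = (\<lambda>i. n * w i)"
  then obtain n w where "1 < n" and "v = (\<lambda>i. n * w i)" by blast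
  then have "n dvd v i" "n dvd v j" by simp_all
  with assms(2) have "is_unit n" by (rule coprime_common_divisor)
  with \<open>1 < n\<close> show False by simp
qed

lemma hyperelliptic_e7_double_weight: "hyperelliptic e7_double_weight"
  unfolding hyperelliptic_def
proof (intro conjI)
  show "primitive e7_double_weight"
    by (rule primitive_if_coprime_coords[of _ 12 17])
      (simp_all add: e7_double_weight_def Lam_def rk_def)
  show "bil e7_double_weight e7_double_weight = -6"
    by (simp add: bil_eq_lat_form lat_form_e7_double_weight e7_double_weight_def)
  show "divisor_is e7_double_weight 2"
    by (rule divisor_is_2_if_pairing_coord[of _ 12]) (simp_all add: lat_form_e7_double_weight)
qed

lemma unigonal_a1_root: "unigonal a1_root"
  unfolding unigonal_def
proof (intro conjI)
  show "primitive a1_root"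
    by (rule primitive_if_coprime_coords[of _ 19 19]) (simp_all add: a1_root_def Lam_def rk_def)
  show "bil a1_root a1_root = -2"
    by (simp add: bil_eq_lat_form lat_form_a1_root a1_root_def)
  show "divisor_is a1_root 2"
    by (rule divisor_is_2_if_pairing_coord[of _ 19]) (simp_all add: lat_form_a1_root)
qed

definition hyperbolic_period :: "nat \<Rightarrow> complex" where
  "hyperbolic_period i = (if i \<in> {0, 1} then 1 else if i \<in> {2, 3} then \<i> else 0)"

lemma hyperbolic_period_Dvec: "hyperbolic_period \<in> Dvec"
  unfolding Dvec_def
proof (intro CollectI conjI)
  show "hyperbolic_period \<in> LamC" by (simp add: LamC_def hyperbolic_period_def rk_def)
  show "hyperbolic_period \<noteq> (\<lambda>_. 0)" by (auto simp: hyperbolic_period_def fun_eq_iff)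
  show "bilC hyperbolic_period hyperbolic_period = 0"
    by (simp add: bilC_eq_lat_form lat_form_explicit hyperbolic_period_def)
  show "0 < Re (herm hyperbolic_period hyperbolic_period)"
    by (simp add: herm_def bilC_eq_lat_form lat_form_explicit hyperbolic_period_def)
qed

lemma Hh_inter_Hu_nonempty: "Hh \<inter> Hu \<noteq> {}"
proof -
  have "hyperbolic_period \<in> Dv e7_double_weight" "hyperbolic_period \<in> Dv a1_root"
    using hyperbolic_period_Dvec by (simp_all add: Dv_def bilC_eq_lat_form embC_def
        lat_form_explicit hyperbolic_period_def e7_double_weight_def a1_root_def)
  then have "F8proj hyperbolic_period \<in> Hh" "F8proj hyperbolic_period \<in> Hu"
    using hyperelliptic_e7_double_weight unigonal_a1_root by (auto simp: Hh_def Hu_def)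
  then show ?thesis by blast
qed

section \<open>Vectors in the orbit of a unigonal vector\<close>

definition even_root :: "(nat \<Rightarrow> int) \<Rightarrow> bool" where
  "even_root v \<longleftrightarrow> v \<in> Lam \<and> (\<forall>x\<in>Lam. even (lat_form v x)) \<and> lat_form v v = -2"

lemma unigonal_imp_even_root:
  assumes "unigonal v"
  shows "even_root v"
proof -
  have "even (lat_form v x)" if "x \<in> Lam" for x
  proof -
    from assms that have "lat_form v x \<in> {2 * k | k. True}"
      unfolding unigonal_def divisor_is_def bil_eq_lat_form by blast
    then show ?thesis by auto
  qed
  with assms show ?thesis
    unfolding unigonal_def primitive_def even_root_def bil_eq_lat_form by auto
qed

lemma even_root_act:
  assumes g: "g \<in> Gamma" and v: "even_root v"
  shows "even_root (act g v)"
proof -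
  have bij: "bij_betw (act g) Lam Lam"
    and pres: "\<And>x y. x \<in> Lam \<Longrightarrow> y \<in> Lam \<Longrightarrow> lat_form (act g x) (act g y) = lat_form x y"
    using g by (auto simp: Gamma_def bil_eq_lat_form)
  have vL: "v \<in> Lam" using v by (simp add: even_root_def)
  have "even (lat_form (act g v) x)" if "x \<in> Lam" for x
  proof -
    obtain y where "y \<in> Lam" "x = act g y"
      using bij \<open>x \<in> Lam\<close> by (metis bij_betw_iff_bijections)
    with v vL pres show ?thesis by (simp add: even_root_def)
  qed
  with v vL bij pres show ?thesis
    by (simp add: even_root_def bij_betw_apply)
qed

lemma unigonal_orbit_even_root: "v \<in> unigonal_orbit \<Longrightarrow> even_root v"
  unfolding unigonal_orbit_def using even_root_act unigonal_imp_even_root by blast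

lemma even_pairing_decomposition:
  assumes v: "v \<in> Lam" and even_pairing: "\<forall>x\<in>Lam. even (lat_form v x)"
  obtains w eps del where "eps \<in> {0, 1}" "del \<in> {0, 1}"
    "v = (\<lambda>i. 2 * w i + eps * e7_double_weight i + del * a1_root i)"
proof -
  define eps del where "eps = v 12 mod 2" "del = v 19 mod 2"
  have row: "even (lat_form v (\<lambda>i. if i = k then 1 else 0))" if "k < 20" for k
    using even_pairing that by (simp add: Lam_def rk_def)
  \<comment> \<open>modulo 2 the Gram matrix is the adjacency matrix of the Dynkin diagram\<close>
  have rows: "even (v 1)" "even (v 0)" "even (v 3)" "even (v 2)" "even (v 5)" "even (v 4 + v 6)"
    "even (v 5 + v 7)" "even (v 6 + v 8)" "even (v 7 + v 9 + v 11)" "even (v 8 + v 10)"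
    "even (v 9)" "even (v 8)" "even (v 13)" "even (v 12 + v 14)" "even (v 13 + v 15)"
    "even (v 14 + v 16 + v 18)" "even (v 15 + v 17)" "even (v 16)" "even (v 15)"
    using row[of 0] row[of 1] row[of 2] row[of 3] row[of 4] row[of 5] row[of 6] row[of 7]
      row[of 8] row[of 9] row[of 10] row[of 11] row[of 12] row[of 13] row[of 14] row[of 15]
      row[of 16] row[of 17] row[of 18]
    by (simp_all add: lat_form_explicit)
  then have even_coord: "even (v i)" if "i \<in> {0..11} \<union> {13, 15, 16, 17}" for i
    using that by (auto simp: atLeastAtMost_iff le_Suc_eq eval_nat_numeral)
  have same_parity: "even (v 14 - v 12)" "even (v 18 - v 12)"
    using rows by presburger+
  have even_rest: "even (v i - eps * e7_double_weight i - del * a1_root i)" if "i < 20" for i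
  proof -
    consider "i \<in> {0..11} \<union> {13, 15, 16, 17}" | "i = 12" | "i = 14" | "i = 18" | "i = 19"
      using \<open>i < 20\<close> by (auto simp: less_Suc_eq eval_nat_numeral)
    then show ?thesis
    proof cases
      case 1
      then have "even (e7_double_weight i)" "a1_root i = 0"
        by (auto simp: e7_double_weight_def a1_root_def)
      with even_coord[OF 1] show ?thesis by simp
    qed (use same_parity in \<open>simp_all add: eps_del_def e7_double_weight_def a1_root_def\<close>)
  qed
  define w where "w i = (v i - eps * e7_double_weight i - del * a1_root i) div 2" for i
  have "v i = 2 * w i + eps * e7_double_weight i + del * a1_root i" for i
  proof (cases "i < 20")
    case True
    with even_rest show ?thesis by (simp add: w_def)
  next
    case False
    with v show ?thesis by (simp add: w_def Lam_def rk_def e7_double_weight_def a1_root_def)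
  qed
  moreover have "eps \<in> {0, 1}" "del \<in> {0, 1}"
    by (auto simp: eps_del_def)
  ultimately show ?thesis
    using that by blast
qed

lemma even_root_eq_a1_root_mod_2:
  assumes "even_root v"
  obtains w where "v = (\<lambda>i. 2 * w i + a1_root i)"
proof -
  obtain w eps del where eps: "eps \<in> {0, 1}" and del: "del \<in> {0, 1}"
    and v: "v = (\<lambda>i. 2 * w i + eps * e7_double_weight i + del * a1_root i)"
    using even_pairing_decomposition assms unfolding even_root_def by metis
  have forms: "lat_form e7_double_weight e7_double_weight = -6"
    "lat_form e7_double_weight a1_root = 0" "lat_form a1_root e7_double_weight = 0"
    "lat_form a1_root a1_root = -2"
    "lat_form e7_double_weight w = -2 * w 12" "lat_form w e7_double_weight = -2 * w 12"
    "lat_form a1_root w = -2 * w 19" "lat_form w a1_root = -2 * w 19"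
    by (simp_all add: lat_form_e7_double_weight lat_form_a1_root e7_double_weight_def
        a1_root_def lat_form_sym[of w])
  obtain q where q: "lat_form w w = 2 * q"
    using even_lat_form_diag by blast
  have "lat_form v v = 8 * q - 8 * eps * w 12 - 8 * del * w 19 - 6 * eps * eps - 2 * del * del"
    unfolding v by (simp only: lat_form_add_left lat_form_add_right lat_form_mult_left
        lat_form_mult_right forms q)
  with assms have "-2 = 8 * q - 8 * eps * w 12 - 8 * del * w 19 - 6 * eps * eps - 2 * del * del"
    by (simp add: even_root_def)
  \<comment> \<open>the norm modulo 8 singles out the class of the A1 root\<close>
  with eps del have "eps = 0 \<and> del = 1"
    by (auto elim!: insertE) presburger+
  with v that show ?thesis by simp
qed

lemma even_root_pairing_mod_4:
  assumes "even_root v1" "even_root v2"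
  shows "lat_form v1 v2 mod 4 = 2"
proof -
  obtain w1 w2 where v1: "v1 = (\<lambda>i. 2 * w1 i + a1_root i)"
    and v2: "v2 = (\<lambda>i. 2 * w2 i + a1_root i)"
    using assms even_root_eq_a1_root_mod_2 by metis
  have forms: "lat_form a1_root a1_root = -2" "lat_form a1_root w2 = -2 * w2 19"
    "lat_form w1 a1_root = -2 * w1 19"
    by (simp_all add: lat_form_a1_root a1_root_def lat_form_sym[of w1])
  have "lat_form v1 v2 = 4 * lat_form w1 w2 - 4 * w1 19 - 4 * w2 19 - 2"
    unfolding v1 v2 by (simp only: lat_form_add_left lat_form_add_right lat_form_mult_left
        lat_form_mult_right forms)
  then show ?thesis by presburger
qed

lemma even_roots_nonneg_combination:
  assumes "even_root v1" "even_root v2"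
  obtains s :: int
  where "s \<in> {1, -1}" "0 \<le> lat_form (\<lambda>i. v1 i + s * v2 i) (\<lambda>i. v1 i + s * v2 i)"
proof -
  define m where "m = lat_form v1 v2"
  define s :: int where "s = (if 0 \<le> m then 1 else -1)"
  have "lat_form (\<lambda>i. v1 i + s * v2 i) (\<lambda>i. v1 i + s * v2 i)
      = lat_form v1 v1 + 2 * s * m + s * s * lat_form v2 v2"
    unfolding m_def by (simp only: lat_form_add_left lat_form_add_right lat_form_mult_left
        lat_form_mult_right lat_form_sym[of v2 v1])
  also have "\<dots> = 2 * \<bar>m\<bar> - 4"
    using assms unfolding s_def even_root_def by (simp add: algebra_simps)
  also have "\<dots> \<ge> 0"
    using even_root_pairing_mod_4[OF assms] unfolding m_def by presburger
  finally have "0 \<le> lat_form (\<lambda>i. v1 i + s * v2 i) (\<lambda>i. v1 i + s * v2 i)" .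
  moreover have "s \<in> {1, -1}" by (simp add: s_def)
  ultimately show ?thesis using that by blast
qed

lemma lin_indep_2_combination_nonzero:
  assumes "lin_indep 2 vs"
  shows "(\<lambda>i. vs 0 i + s * vs 1 i) \<noteq> (\<lambda>_. 0)"
proof
  define c :: "nat \<Rightarrow> int" where "c k = (if k = 0 then 1 else s)" for k
  assume "(\<lambda>i. vs 0 i + s * vs 1 i) = (\<lambda>_. 0)"
  then have "\<forall>i. (\<Sum>k<2. c k * vs k i) = 0"
    by (simp add: c_def eval_nat_numeral fun_eq_iff)
  then have "c 0 = 0"
    using assms[unfolded lin_indep_def, rule_format, of c 0] by simp
  then show False by (simp add: c_def)
qed

lemma Hu_self_2_empty: "Hu_self 2 = {}"
proof -
  have two: "{..<2::nat} = {0, 1}" by auto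
  have False if vs: "\<forall>k<2. vs k \<in> unigonal_orbit" "lin_indep 2 vs"
    and z: "z \<in> Dv (vs 0)" "z \<in> Dv (vs 1)" for vs z
  proof -
    have roots: "even_root (vs 0)" "even_root (vs 1)"
      using vs(1)[rule_format, of 0] vs(1)[rule_format, of 1] unigonal_orbit_even_root
      by simp_all
    then obtain s where "0 \<le> lat_form (\<lambda>i. vs 0 i + s * vs 1 i) (\<lambda>i. vs 0 i + s * vs 1 i)"
      by (rule even_roots_nonneg_combination)
    moreover have "(\<lambda>i. vs 0 i + s * vs 1 i) \<in> Lam"
      using roots by (simp add: even_root_def Lam_def)
    moreover have "bilC z (embC (\<lambda>i. vs 0 i + s * vs 1 i)) = 0"
    proof -
      have "embC (\<lambda>i. vs 0 i + s * vs 1 i) = (\<lambda>i. embC (vs 0) i + of_int s * embC (vs 1) i)"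
        by (simp add: embC_def)
      with z show ?thesis
        by (simp add: Dv_def bilC_eq_lat_form lat_form_add_right lat_form_mult_right)
    qed
    moreover have "z \<in> Dvec" using z by (simp add: Dv_def)
    ultimately have "(\<lambda>i. vs 0 i + s * vs 1 i) = (\<lambda>_. 0)"
      using lattice_vector_orthogonal_to_period_eq_0 by (simp add: bil_eq_lat_form)
    with lin_indep_2_combination_nonzero[OF vs(2)] show False by blast
  qed
  then show ?thesis
    unfolding Hu_self_def two by auto
qed

theorem mainTheorem13:
  shows "Hh \<inter> Hu \<noteq> {} \<and> Hu_self 2 = {}"
  using Hh_inter_Hu_nonempty Hu_self_2_empty by blast

end
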